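(* Consider the convex program $$\min F(x)\quad\text{subject to } G_i(x)\le b_i\ (i=1,\dots,m),\quad l\le x\le u,$$ with variables $x\in\mathbb{R}^n$, where $F$ and each $G_i$ are convex and differentiable on the box domain $B=\{x: l\le x\le u\}$. Let $(\mathcal{P},\mathcal{Q})$ be a reduction coloring of this program. Then: (i) if $x$ is an optimal solution of the original program, then $x'=\Pi_{\mathcal{Q}}^{\mathrm{Scaled}}x$ is an optimal solution of the reduced program; (ii) if $x'$ is an optimal solution of the reduced program, then $x=\Pi_{\mathcal{Q}}x'$ is an optimal solution of the original program.
   Context: A partition of a finite set $V$ is a set of nonempty pairwise disjoint subsets ("colors") whose union is $V$. For a partition $\mathcal{Q}$ of $\{1,\dots,n\}$, the partition matrix $\Pi_{\mathcal{Q}}\in\{0,1\}^{n\times|\mathcal{Q}|}$ has $(\Pi_{\mathcal{Q}})_{jT}=1$ if $j\in T$ and $0$ otherwise; $\Pi_{\mathcal{Q}}^{\mathrm{Scaled}}\in\mathbb{R}^{|\mathcal{Q}|\times n}$ is $\Pi_{\mathcal{Q}}^\top$ with each row normalized to sum to $1$, i.e. $(\Pi_{\mathcal{Q}}^{\mathrm{Scaled}})_{Tj}=1/|T|$ if $j\in T$ and $0$ otherwise. A point $\hat x\in\mathbb{R}^n$ is called $\mathcal{Q}$-constant if $\hat x_{j_1}=\hat x_{j_2}$ whenever $j_1,j_2$ lie in the same color of $\mathcal{Q}$. Reduction coloring: a partition $\mathcal{P}$ of the constraint indices $\{1,\dots,m\}$ and a partition $\mathcal{Q}$ of the variable indices $\{1,\dots,n\}$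 form a reduction coloring if (a) for each $T\in\mathcal{Q}$, $(l_j,u_j)$ is the same for all $j\in T$; (b) for each $S\in\mathcal{P}$, $b_i$ is the same for all $i\in S$; and for every $\mathcal{Q}$-constant $\hat x\in B$: (c) for each $T\in\mathcal{Q}$ and $j_1,j_2\in T$, $\partial F/\partial x_{j_1}(\hat x)=\partial F/\partial x_{j_2}(\hat x)$; (d) for each $S\in\mathcal{P}$, $T\in\mathcal{Q}$ and $j_1,j_2\in T$, $\partial(\sum_{i\in S}G_i)/\partial x_{j_1}(\hat x)=\partial(\sum_{i\in S}G_i)/\partial x_{j_2}(\hat x)$; (e) for each $S\in\mathcal{P}$, $G_i(\hat x)$ is the same for all $i\in S$. Reduced program: variables $x'\in\mathbb{R}^{|\mathcal{Q}|}$; objective $F'(x')=F(\Pi_{\mathcal{Q}}x')$; for each $S\in\mathcal{P}$ one constraint $G'_S(x')=G_i(\Pi_{\mathcal{Q}}x')\le b'_S$ (any $i\in S$; well defined by (e)), where $b'=\Pi_{\mathcal{P}}^{\mathrm{Scaled}}b$; box constraints $l'\le x'\le u'$ with $l'=\Pi_{\mathcal{Q}}^{\mathrm{Scaled}}l$, $u'=\Pi_{\mathcal{Q}}^{\mathrm{Scaled}}u$. *)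

theory Defs
  imports "HOL-Analysis.Analysis" "HOL-Library.Disjoint_Sets"
begin

(* Variables are indexed by a finite type 'n (so x :: real^'n), constraints by {..<m}.
   Colors are subsets of the index sets; reduced variables x' are functions on colors. *)

definition box_dom :: "real^'n \<Rightarrow> real^'n \<Rightarrow> (real^'n) set" where
  "box_dom l u = {x. \<forall>j. l$j \<le> x$j \<and> x$j \<le> u$j}"

definition Q_constant :: "'n set set \<Rightarrow> real^'n \<Rightarrow> bool" where
  "Q_constant Q x \<longleftrightarrow> (\<forall>T\<in>Q. \<forall>j1\<in>T. \<forall>j2\<in>T. x$j1 = x$j2)"

definition pderiv_at :: "(real^'n \<Rightarrow> real) \<Rightarrow> 'n \<Rightarrow> real^'n \<Rightarrow> real" where
  "pderiv_at f j x = frechet_derivative f (at x) (axis j 1)"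

definition PiQ :: "'n set set \<Rightarrow> ('n set \<Rightarrow> real) \<Rightarrow> real^'n" where
  "PiQ Q x' = (\<chi> j. \<Sum>T\<in>Q. (if j \<in> T then 1 else 0) * x' T)"

definition PiQ_scaled :: "'n set set \<Rightarrow> real^'n \<Rightarrow> ('n set \<Rightarrow> real)" where
  "PiQ_scaled Q x = (\<lambda>T. \<Sum>j\<in>UNIV. (if j \<in> T then 1 / real (card T) else 0) * x$j)"

definition PiP_scaled :: "nat \<Rightarrow> nat set set \<Rightarrow> (nat \<Rightarrow> real) \<Rightarrow> (nat set \<Rightarrow> real)" where
  "PiP_scaled m P b = (\<lambda>S. \<Sum>i<m. (if i \<in> S then 1 / real (card S) else 0) * b i)"

definition reduction_coloring ::
  "nat \<Rightarrow> (real^'n \<Rightarrow> real) \<Rightarrow> (nat \<Rightarrow> real^'n \<Rightarrow> real) \<Rightarrow> (nat \<Rightarrow> real)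
   \<Rightarrow> real^'n \<Rightarrow> real^'n \<Rightarrow> nat set set \<Rightarrow> 'n set set \<Rightarrow> bool" where
  "reduction_coloring m F G b l u P Q \<longleftrightarrow>
     partition_on {..<m} P \<and> partition_on (UNIV :: 'n set) Q \<and>
     (\<forall>T\<in>Q. \<forall>j1\<in>T. \<forall>j2\<in>T. l$j1 = l$j2 \<and> u$j1 = u$j2) \<and>
     (\<forall>S\<in>P. \<forall>i1\<in>S. \<forall>i2\<in>S. b i1 = b i2) \<and>
     (\<forall>xh \<in> box_dom l u. Q_constant Q xh \<longrightarrow>
        (\<forall>T\<in>Q. \<forall>j1\<in>T. \<forall>j2\<in>T. pderiv_at F j1 xh = pderiv_at F j2 xh) \<and>
        (\<forall>S\<in>P. \<forall>T\<in>Q. \<forall>j1\<in>T. \<forall>j2\<in>T.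
            pderiv_at (\<lambda>x. \<Sum>i\<in>S. G i x) j1 xh = pderiv_at (\<lambda>x. \<Sum>i\<in>S. G i x) j2 xh) \<and>
        (\<forall>S\<in>P. \<forall>i1\<in>S. \<forall>i2\<in>S. G i1 xh = G i2 xh))"

definition orig_feasible ::
  "nat \<Rightarrow> (nat \<Rightarrow> real^'n \<Rightarrow> real) \<Rightarrow> (nat \<Rightarrow> real) \<Rightarrow> real^'n \<Rightarrow> real^'n \<Rightarrow> real^'n \<Rightarrow> bool" where
  "orig_feasible m G b l u x \<longleftrightarrow> (\<forall>i<m. G i x \<le> b i) \<and> x \<in> box_dom l u"

definition orig_optimal ::
  "nat \<Rightarrow> (real^'n \<Rightarrow> real) \<Rightarrow> (nat \<Rightarrow> real^'n \<Rightarrow> real) \<Rightarrow> (nat \<Rightarrow> real)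
   \<Rightarrow> real^'n \<Rightarrow> real^'n \<Rightarrow> real^'n \<Rightarrow> bool" where
  "orig_optimal m F G b l u x \<longleftrightarrow> orig_feasible m G b l u x \<and>
     (\<forall>y. orig_feasible m G b l u y \<longrightarrow> F x \<le> F y)"

definition red_obj :: "(real^'n \<Rightarrow> real) \<Rightarrow> 'n set set \<Rightarrow> ('n set \<Rightarrow> real) \<Rightarrow> real" where
  "red_obj F Q x' = F (PiQ Q x')"

definition red_con :: "(nat \<Rightarrow> real^'n \<Rightarrow> real) \<Rightarrow> 'n set set \<Rightarrow> nat set \<Rightarrow> ('n set \<Rightarrow> real) \<Rightarrow> real" where
  "red_con G Q S x' = G (SOME i. i \<in> S) (PiQ Q x')"

definition red_feasible ::
  "nat \<Rightarrow> (nat \<Rightarrow> real^'n \<Rightarrow> real) \<Rightarrow> (nat \<Rightarrow> real) \<Rightarrow> real^'n \<Rightarrow> real^'n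
   \<Rightarrow> nat set set \<Rightarrow> 'n set set \<Rightarrow> ('n set \<Rightarrow> real) \<Rightarrow> bool" where
  "red_feasible m G b l u P Q x' \<longleftrightarrow>
     (\<forall>S\<in>P. red_con G Q S x' \<le> PiP_scaled m P b S) \<and>
     (\<forall>T\<in>Q. PiQ_scaled Q l T \<le> x' T \<and> x' T \<le> PiQ_scaled Q u T)"

definition red_optimal ::
  "nat \<Rightarrow> (real^'n \<Rightarrow> real) \<Rightarrow> (nat \<Rightarrow> real^'n \<Rightarrow> real) \<Rightarrow> (nat \<Rightarrow> real) \<Rightarrow> real^'n \<Rightarrow> real^'n
   \<Rightarrow> nat set set \<Rightarrow> 'n set set \<Rightarrow> ('n set \<Rightarrow> real) \<Rightarrow> bool" where
  "red_optimal m F G b l u P Q x' \<longleftrightarrow> red_feasible m G b l u P Q x' \<and>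
     (\<forall>y'. red_feasible m G b l u P Q y' \<longrightarrow> red_obj F Q x' \<le> red_obj F Q y')"

end

theory Submission
  imports Defs
begin

(* Averaging a feasible point y over each color, y \<mapsto> \<Pi>_Q \<Pi>_Q^Scaled y, keeps it feasible
   and does not increase the objective. At the average c the gradients of F and of each
   \<Sum>_{i\<in>S} G_i are constant on colors while y - c sums to zero on every color, so these
   gradients annihilate y - c and convexity gives F c \<le> F y and
   |S| G_i c = \<Sum>_{i\<in>S} G_i c \<le> \<Sum>_{i\<in>S} G_i y \<le> |S| b_i.
   Since \<Pi>_Q identifies the feasible points of the reduced program with the Q-constant
   feasible points of the original one, optimal solutions correspond. *)

lemma convex_on_has_derivative_above_tangent:
  fixes f :: "'a::real_normed_vector \<Rightarrow> real"
  assumes convex: "convex_on S f" and "c \<in> S" "y \<in> S"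
    and deriv: "(f has_derivative D) (at c)"
  shows "D (y - c) \<le> f y - f c"
proof -
  define g where "g t = f (c + t *\<^sub>R (y - c))" for t :: real
  have "((\<lambda>t. c + t *\<^sub>R (y - c)) has_derivative (\<lambda>t. t *\<^sub>R (y - c))) (at 0)"
    by (auto intro!: derivative_eq_intros)
  then have "(g has_derivative (\<lambda>t. D (t *\<^sub>R (y - c)))) (at 0)"
    unfolding g_def using deriv
    by (intro has_derivative_compose[where f="\<lambda>t. c + t *\<^sub>R (y - c)" and g=f, simplified]) auto
  moreover have "D (t *\<^sub>R (y - c)) = t * D (y - c)" for t
    using has_derivative_linear[OF deriv] by (simp add: linear_scale)
  ultimately have "(g has_real_derivative D (y - c)) (at 0)"
    by (simp add: has_field_derivative_def mult_commute_abs)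
  then have lim: "((\<lambda>t. (g t - g 0) / (t - 0)) \<longlongrightarrow> D (y - c)) (at_right 0)"
    using has_field_derivative_iff has_field_derivative_at_within by blast
  have "eventually (\<lambda>t. (g t - g 0) / (t - 0) \<le> f y - f c) (at_right 0)"
    using eventually_at_right_real[OF zero_less_one]
  proof eventually_elim
    fix t :: real assume t: "t \<in> {0<..<1}"
    have "g t = f ((1 - t) *\<^sub>R c + t *\<^sub>R y)"
      unfolding g_def by (simp add: algebra_simps)
    also have "\<dots> \<le> (1 - t) * f c + t * f y"
      using convex_onD[OF convex] t \<open>c \<in> S\<close> \<open>y \<in> S\<close> by auto
    finally have "g t - g 0 \<le> t * (f y - f c)"
      by (simp add: g_def algebra_simps)
    then show "(g t - g 0) / (t - 0) \<le> f y - f c"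
      using t by (simp add: divide_le_eq mult.commute)
  qed
  then show ?thesis
    by (rule tendsto_upperbound[OF lim]) simp
qed

lemma convex_on_sum_fun:
  assumes "finite I" "I \<noteq> {}" "\<And>i. i \<in> I \<Longrightarrow> convex_on S (g i)"
  shows "convex_on S (\<lambda>x. \<Sum>i\<in>I. g i x)"
  using assms by (induction I rule: finite_ne_induct) auto

lemma sum_divide_card_const:
  assumes "finite T" "k \<in> T" "\<And>j. j \<in> T \<Longrightarrow> f j = f k"
  shows "(\<Sum>j\<in>T. f j) / card T = (f k :: real)"
proof -
  have "(\<Sum>j\<in>T. f j) = card T * f k"
    using sum.cong[OF refl assms(3)] by simp
  then show ?thesis
    using assms(1,2) by (auto simp: card_gt_0_iff)
qed

lemma partition_on_UNIV_color_finite: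
  assumes "partition_on (UNIV :: 'n::finite set) Q" "T \<in> Q"
  shows "finite T" "T \<noteq> {}" "card T > 0"
  using partition_onD3[OF assms(1)] assms(2) by (auto simp: card_gt_0_iff)

lemma linear_eq_0_if_color_sums_eq_0:
  fixes D :: "real^'n \<Rightarrow> real"
  assumes "linear D" and Q: "partition_on UNIV Q"
    and const: "\<And>T j k. T \<in> Q \<Longrightarrow> j \<in> T \<Longrightarrow> k \<in> T \<Longrightarrow> D (axis j 1) = D (axis k 1)"
    and sums: "\<And>T. T \<in> Q \<Longrightarrow> (\<Sum>j\<in>T. v$j) = 0"
  shows "D v = 0"
proof -
  have "D v = D (\<Sum>j\<in>UNIV. v$j *s axis j 1)"
    by (simp add: basis_expansion)
  also have "\<dots> = (\<Sum>j\<in>UNIV. v$j * D (axis j 1))"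
    using \<open>linear D\<close> by (simp add: linear_sum linear_scale scalar_mult_eq_scaleR)
  also have "\<dots> = (\<Sum>T\<in>Q. \<Sum>j\<in>T. v$j * D (axis j 1))"
    by (rule sum.partition[OF finite Q])
  also have "\<dots> = 0"
  proof (rule sum.neutral, rule ballI)
    fix T assume T: "T \<in> Q"
    then obtain k where k: "k \<in> T"
      using partition_on_UNIV_color_finite[OF Q] by blast
    have "(\<Sum>j\<in>T. v$j * D (axis j 1)) = (\<Sum>j\<in>T. v$j) * D (axis k 1)"
      using const[OF T _ k] by (simp add: sum_distrib_right)
    then show "(\<Sum>j\<in>T. v$j * D (axis j 1)) = 0"
      using sums[OF T] by simp
  qed
  finally show ?thesis .
qed

lemma convex_on_le_if_color_sums_eq:
  fixes f :: "real^'n \<Rightarrow> real"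
  assumes Q: "partition_on UNIV Q"
    and "convex_on S f" "c \<in> S" "y \<in> S" and "f differentiable (at c)"
    and grad: "\<And>T j k. T \<in> Q \<Longrightarrow> j \<in> T \<Longrightarrow> k \<in> T \<Longrightarrow> pderiv_at f j c = pderiv_at f k c"
    and sums: "\<And>T. T \<in> Q \<Longrightarrow> (\<Sum>j\<in>T. y$j) = (\<Sum>j\<in>T. c$j)"
  shows "f c \<le> f y"
proof -
  let ?D = "frechet_derivative f (at c)"
  have deriv: "(f has_derivative ?D) (at c)"
    using \<open>f differentiable (at c)\<close> frechet_derivative_works by blast
  have "?D (y - c) = 0"
  proof (rule linear_eq_0_if_color_sums_eq_0[OF has_derivative_linear[OF deriv] Q])
    show "?D (axis j 1) = ?D (axis k 1)" if "T \<in> Q" "j \<in> T" "k \<in> T" for T j k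
      using grad[OF that] unfolding pderiv_at_def .
    show "(\<Sum>j\<in>T. (y - c)$j) = 0" if "T \<in> Q" for T
      using sums[OF that] by (simp add: sum_subtractf)
  qed
  then show ?thesis
    using convex_on_has_derivative_above_tangent[OF assms(2-4) deriv] by simp
qed

lemma PiQ_nth:
  assumes Q: "partition_on (UNIV :: 'n::finite set) Q" and "T \<in> Q" "j \<in> T"
  shows "PiQ Q x' $ j = x' T"
proof -
  have "j \<in> T' \<longleftrightarrow> T' = T" if "T' \<in> Q" for T'
    using partition_onD2[OF Q] that assms(2,3) by (auto simp: disjoint_def)
  then have "PiQ Q x' $ j = (\<Sum>T'\<in>Q. if T' = T then x' T else 0)"
    unfolding PiQ_def vec_lambda_beta by (intro sum.cong) auto
  also have "\<dots> = x' T"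
    using finite_elements[OF finite Q] \<open>T \<in> Q\<close> by simp
  finally show ?thesis .
qed

lemma Q_constant_PiQ:
  assumes "partition_on (UNIV :: 'n::finite set) Q"
  shows "Q_constant Q (PiQ Q x')"
  unfolding Q_constant_def using PiQ_nth[OF assms] by simp

lemma PiQ_scaled_eq_mean: "PiQ_scaled Q x T = (\<Sum>j\<in>T. x$j) / card T"
proof -
  have "PiQ_scaled Q x T = (\<Sum>j\<in>UNIV. if j \<in> T then x$j / card T else 0)"
    unfolding PiQ_scaled_def by (rule sum.cong) auto
  then show ?thesis by (simp add: sum.If_cases sum_divide_distrib)
qed

lemma PiP_scaled_eq_mean:
  assumes "S \<subseteq> {..<m}"
  shows "PiP_scaled m P b S = (\<Sum>i\<in>S. b i) / card S"
proof -
  have "PiP_scaled m P b S = (\<Sum>i<m. if i \<in> S then b i / card S else 0)"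
    unfolding PiP_scaled_def by (rule sum.cong) auto
  also have "\<dots> = (\<Sum>i\<in>S. b i / card S)"
    using assms by (simp add: sum.If_cases Int_absorb1)
  finally show ?thesis by (simp add: sum_divide_distrib)
qed

definition color_avg :: "'n set set \<Rightarrow> real^'n \<Rightarrow> real^'n" where
  "color_avg Q y = PiQ Q (PiQ_scaled Q y)"

lemma color_avg_nth:
  assumes "partition_on (UNIV :: 'n::finite set) Q" "T \<in> Q" "j \<in> T"
  shows "color_avg Q y $ j = (\<Sum>k\<in>T. y$k) / card T"
  using assms by (simp add: color_avg_def PiQ_nth PiQ_scaled_eq_mean)

lemma sum_color_avg:
  assumes Q: "partition_on (UNIV :: 'n::finite set) Q" and "T \<in> Q"
  shows "(\<Sum>j\<in>T. color_avg Q y $ j) = (\<Sum>j\<in>T. y$j)"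
  using partition_on_UNIV_color_finite[OF assms] by (simp add: color_avg_nth[OF assms])

lemma Q_constant_color_avg:
  "partition_on (UNIV :: 'n::finite set) Q \<Longrightarrow> Q_constant Q (color_avg Q y)"
  unfolding color_avg_def by (rule Q_constant_PiQ)

lemma PiQ_scaled_eq_if_color_constant:
  assumes "partition_on (UNIV :: 'n::finite set) Q" "T \<in> Q" "j \<in> T"
    and "\<And>k. k \<in> T \<Longrightarrow> v$k = v$j"
  shows "PiQ_scaled Q v T = v$j"
  unfolding PiQ_scaled_eq_mean
  using sum_divide_card_const partition_on_UNIV_color_finite(1)[OF assms(1,2)] assms(3,4) .

lemma color_avg_in_box_dom:
  assumes Q: "partition_on UNIV Q"
    and lu: "\<And>T j k. T \<in> Q \<Longrightarrow> j \<in> T \<Longrightarrow> k \<in> T \<Longrightarrow> l$j = l$k \<and> u$j = u$k"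
    and y: "y \<in> box_dom l u"
  shows "color_avg Q y \<in> box_dom l u"
  unfolding box_dom_def
proof (intro CollectI allI)
  fix j
  obtain T where T: "T \<in> Q" "j \<in> T"
    using partition_onD1[OF Q] by blast
  have avg: "color_avg Q y $ j = PiQ_scaled Q y T"
    by (simp add: color_avg_nth[OF Q T] PiQ_scaled_eq_mean)
  have "PiQ_scaled Q l T \<le> PiQ_scaled Q y T" "PiQ_scaled Q y T \<le> PiQ_scaled Q u T"
    using y unfolding PiQ_scaled_eq_mean box_dom_def
    by (auto intro!: divide_right_mono sum_mono)
  moreover have "PiQ_scaled Q l T = l$j" "PiQ_scaled Q u T = u$j"
    using PiQ_scaled_eq_if_color_constant[OF Q T] lu[OF T(1) _ T(2)] by auto
  ultimately show "l$j \<le> color_avg Q y $ j \<and> color_avg Q y $ j \<le> u$j"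
    unfolding avg by simp
qed

lemma PiQ_in_box_dom_iff:
  assumes Q: "partition_on UNIV Q"
    and lu: "\<And>T j k. T \<in> Q \<Longrightarrow> j \<in> T \<Longrightarrow> k \<in> T \<Longrightarrow> l$j = l$k \<and> u$j = u$k"
  shows "PiQ Q x' \<in> box_dom l u \<longleftrightarrow>
    (\<forall>T\<in>Q. PiQ_scaled Q l T \<le> x' T \<and> x' T \<le> PiQ_scaled Q u T)"
proof -
  have color: "PiQ_scaled Q l T = l$j \<and> PiQ_scaled Q u T = u$j \<and> PiQ Q x' $ j = x' T"
    if "T \<in> Q" "j \<in> T" for T j
    using PiQ_scaled_eq_if_color_constant[OF Q that] lu[OF that(1) _ that(2)] PiQ_nth[OF Q that] by auto
  show ?thesis
  proof
    assume box: "PiQ Q x' \<in> box_dom l u"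
    show "\<forall>T\<in>Q. PiQ_scaled Q l T \<le> x' T \<and> x' T \<le> PiQ_scaled Q u T"
    proof
      fix T assume T: "T \<in> Q"
      then obtain j where j: "j \<in> T"
        using partition_on_UNIV_color_finite(2)[OF Q] by blast
      have "l$j \<le> PiQ Q x' $ j \<and> PiQ Q x' $ j \<le> u$j"
        using box unfolding box_dom_def by blast
      then show "PiQ_scaled Q l T \<le> x' T \<and> x' T \<le> PiQ_scaled Q u T"
        using color[OF T j] by simp
    qed
  next
    assume bounds: "\<forall>T\<in>Q. PiQ_scaled Q l T \<le> x' T \<and> x' T \<le> PiQ_scaled Q u T"
    show "PiQ Q x' \<in> box_dom l u"
      unfolding box_dom_def
    proof (intro CollectI allI)
      fix j
      obtain T where "T \<in> Q" "j \<in> T"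
        using partition_onD1[OF Q] by blast
      with bounds color show "l$j \<le> PiQ Q x' $ j \<and> PiQ Q x' $ j \<le> u$j"
        by auto
    qed
  qed
qed

context
  fixes m :: nat and F :: "real^'n \<Rightarrow> real" and G :: "nat \<Rightarrow> real^'n \<Rightarrow> real"
    and b :: "nat \<Rightarrow> real" and l u :: "real^'n" and P :: "nat set set" and Q :: "'n set set"
  assumes coloring: "reduction_coloring m F G b l u P Q"
begin

lemma constraint_colors: "partition_on {..<m} P"
  using coloring unfolding reduction_coloring_def by meson

lemma variable_colors: "partition_on UNIV Q"
  using coloring unfolding reduction_coloring_def by meson

lemma bounds_color_constant: "T \<in> Q \<Longrightarrow> j \<in> T \<Longrightarrow> k \<in> T \<Longrightarrow> l$j = l$k \<and> u$j = u$k"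
  using coloring unfolding reduction_coloring_def by meson

lemma rhs_color_constant: "S \<in> P \<Longrightarrow> i \<in> S \<Longrightarrow> k \<in> S \<Longrightarrow> b i = b k"
  using coloring unfolding reduction_coloring_def by meson

lemma objective_gradient_color_constant:
  "x \<in> box_dom l u \<Longrightarrow> Q_constant Q x \<Longrightarrow> T \<in> Q \<Longrightarrow> j \<in> T \<Longrightarrow> k \<in> T \<Longrightarrow>
    pderiv_at F j x = pderiv_at F k x"
  using coloring unfolding reduction_coloring_def by meson

lemma constraint_sum_gradient_color_constant:
  "x \<in> box_dom l u \<Longrightarrow> Q_constant Q x \<Longrightarrow> S \<in> P \<Longrightarrow> T \<in> Q \<Longrightarrow> j \<in> T \<Longrightarrow> k \<in> T \<Longrightarrow>
    pderiv_at (\<lambda>x. \<Sum>i\<in>S. G i x) j x = pderiv_at (\<lambda>x. \<Sum>i\<in>S. G i x) k x"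
  using coloring unfolding reduction_coloring_def by meson

lemma constraint_color_constant:
  "x \<in> box_dom l u \<Longrightarrow> Q_constant Q x \<Longrightarrow> S \<in> P \<Longrightarrow> i \<in> S \<Longrightarrow> k \<in> S \<Longrightarrow> G i x = G k x"
  using coloring unfolding reduction_coloring_def by meson

lemma constraint_color_finite:
  assumes "S \<in> P"
  shows "finite S" "S \<subseteq> {..<m}" "S \<noteq> {}"
  using partition_onD1[OF constraint_colors] partition_onD3[OF constraint_colors] assms
  by (auto intro: finite_subset)

lemma PiP_scaled_eq_rhs:
  assumes "S \<in> P" "i \<in> S"
  shows "PiP_scaled m P b S = b i"
  unfolding PiP_scaled_eq_mean[OF constraint_color_finite(2)[OF assms(1)]]
  by (rule sum_divide_card_const)
    (use constraint_color_finite(1) rhs_color_constant assms in blast)+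

lemma red_feasible_iff_orig_feasible:
  "red_feasible m G b l u P Q x' \<longleftrightarrow> orig_feasible m G b l u (PiQ Q x')"
proof -
  let ?x = "PiQ Q x'"
  have "(\<forall>S\<in>P. red_con G Q S x' \<le> PiP_scaled m P b S) \<longleftrightarrow> (\<forall>i<m. G i ?x \<le> b i)"
    if box: "?x \<in> box_dom l u"
  proof -
    have "red_con G Q S x' \<le> PiP_scaled m P b S \<longleftrightarrow> (\<forall>i\<in>S. G i ?x \<le> b i)"
      if S: "S \<in> P" for S
    proof -
      define i0 where "i0 = (SOME i. i \<in> S)"
      have i0: "i0 \<in> S"
        unfolding i0_def using constraint_color_finite(3)[OF S] by (simp add: some_in_eq)
      have "G i ?x = G i0 ?x \<and> b i = b i0" if "i \<in> S" for i
        using constraint_color_constant[OF box Q_constant_PiQ[OF variable_colors] S that i0]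
          rhs_color_constant[OF S that i0] by blast
      moreover have "red_con G Q S x' = G i0 ?x" "PiP_scaled m P b S = b i0"
        unfolding red_con_def i0_def[symmetric] using PiP_scaled_eq_rhs[OF S i0] by simp_all
      ultimately show ?thesis
        using i0 by metis
    qed
    moreover have "{..<m} = \<Union>P"
      using partition_onD1[OF constraint_colors] .
    ultimately show ?thesis
      by (metis (no_types, lifting) UnionE UnionI lessThan_iff)
  qed
  moreover have "?x \<in> box_dom l u \<longleftrightarrow>
      (\<forall>T\<in>Q. PiQ_scaled Q l T \<le> x' T \<and> x' T \<le> PiQ_scaled Q u T)"
    using bounds_color_constant by (rule PiQ_in_box_dom_iff[OF variable_colors])
  ultimately show ?thesis
    unfolding red_feasible_def orig_feasible_def by blast
qed

lemma color_avg_in_box: "y \<in> box_dom l u \<Longrightarrow> color_avg Q y \<in> box_dom l u"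
  by (rule color_avg_in_box_dom[OF variable_colors bounds_color_constant])

lemma color_avg_objective_le:
  assumes "convex_on (box_dom l u) F" "\<And>x. x \<in> box_dom l u \<Longrightarrow> F differentiable (at x)"
    and y: "y \<in> box_dom l u"
  shows "F (color_avg Q y) \<le> F y"
proof -
  let ?c = "color_avg Q y"
  have c: "?c \<in> box_dom l u" "Q_constant Q ?c"
    using color_avg_in_box[OF y] Q_constant_color_avg[OF variable_colors] by simp_all
  show ?thesis
  proof (rule convex_on_le_if_color_sums_eq[OF variable_colors assms(1) c(1) y assms(2)[OF c(1)]])
    show "pderiv_at F j ?c = pderiv_at F k ?c" if "T \<in> Q" "j \<in> T" "k \<in> T" for T j k
      using objective_gradient_color_constant[OF c that] .
    show "(\<Sum>j\<in>T. y$j) = (\<Sum>j\<in>T. ?c$j)" if "T \<in> Q" for T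
      using sum_color_avg[OF variable_colors that] by simp
  qed
qed

lemma orig_feasible_color_avg:
  assumes convex: "\<And>i. i < m \<Longrightarrow> convex_on (box_dom l u) (G i)"
    and diff: "\<And>i x. i < m \<Longrightarrow> x \<in> box_dom l u \<Longrightarrow> G i differentiable (at x)"
    and y: "orig_feasible m G b l u y"
  shows "orig_feasible m G b l u (color_avg Q y)"
proof -
  let ?c = "color_avg Q y"
  have y_box: "y \<in> box_dom l u" and y_le: "\<And>i. i < m \<Longrightarrow> G i y \<le> b i"
    using y unfolding orig_feasible_def by blast+
  have c: "?c \<in> box_dom l u" "Q_constant Q ?c"
    using color_avg_in_box[OF y_box] Q_constant_color_avg[OF variable_colors] by simp_all
  have "G i ?c \<le> b i" if "i < m" for i
  proof -
    obtain S where S: "S \<in> P" "i \<in> S"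
      using partition_onD1[OF constraint_colors] \<open>i < m\<close> by blast
    note S_finite = constraint_color_finite[OF S(1)]
    let ?H = "\<lambda>x. \<Sum>k\<in>S. G k x"
    have "?H ?c \<le> ?H y"
    proof (rule convex_on_le_if_color_sums_eq[OF variable_colors _ c(1) y_box])
      show "convex_on (box_dom l u) ?H"
        using S_finite convex by (intro convex_on_sum_fun) auto
      show "?H differentiable (at ?c)"
        using S_finite diff c(1) by (intro differentiable_sum) auto
      show "pderiv_at ?H j ?c = pderiv_at ?H k ?c" if "T \<in> Q" "j \<in> T" "k \<in> T" for T j k
        using constraint_sum_gradient_color_constant[OF c S(1) that] .
      show "(\<Sum>j\<in>T. y$j) = (\<Sum>j\<in>T. ?c$j)" if "T \<in> Q" for T
        using sum_color_avg[OF variable_colors that] by simp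
    qed
    also have "\<dots> \<le> (\<Sum>k\<in>S. b i)"
      using S_finite y_le rhs_color_constant[OF S(1) _ S(2)] by (intro sum_mono) fastforce
    finally have "card S * G i ?c \<le> card S * b i"
      using constraint_color_constant[OF c S(1) _ S(2)] by simp
    then show ?thesis
      using S_finite by (simp add: card_gt_0_iff)
  qed
  then show ?thesis
    using c(1) unfolding orig_feasible_def by blast
qed

end

lemma optimal_solutions_correspond:
  fixes f :: "'a \<Rightarrow> 'c::preorder"
  assumes feasible_iff: "\<And>x'. feasible' x' \<longleftrightarrow> feasible (lift x')"
    and improve: "\<And>y. feasible y \<Longrightarrow> feasible (lift (proj y)) \<and> f (lift (proj y)) \<le> f y"
  shows "feasible x \<and> (\<forall>y. feasible y \<longrightarrow> f x \<le> f y) \<Longrightarrow>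
      feasible' (proj x) \<and> (\<forall>y'. feasible' y' \<longrightarrow> f (lift (proj x)) \<le> f (lift y'))"
    and "feasible' x' \<and> (\<forall>y'. feasible' y' \<longrightarrow> f (lift x') \<le> f (lift y')) \<Longrightarrow>
      feasible (lift x') \<and> (\<forall>y. feasible y \<longrightarrow> f (lift x') \<le> f y)"
  using assms by (meson order_trans)+

theorem theorem1:
  fixes m :: nat
    and F :: "real^'n \<Rightarrow> real"
    and G :: "nat \<Rightarrow> real^'n \<Rightarrow> real"
    and b :: "nat \<Rightarrow> real"
    and l u :: "real^'n"
    and P :: "nat set set" and Q :: "'n set set"
  assumes "convex_on (box_dom l u) F"
    and "\<And>i. i < m \<Longrightarrow> convex_on (box_dom l u) (G i)"
    and "\<And>x. x \<in> box_dom l u \<Longrightarrow> F differentiable (at x)"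
    and "\<And>i x. i < m \<Longrightarrow> x \<in> box_dom l u \<Longrightarrow> G i differentiable (at x)"
    and "reduction_coloring m F G b l u P Q"
  shows "(\<forall>x. orig_optimal m F G b l u x \<longrightarrow> red_optimal m F G b l u P Q (PiQ_scaled Q x))
       \<and> (\<forall>x'. red_optimal m F G b l u P Q x' \<longrightarrow> orig_optimal m F G b l u (PiQ Q x'))"
proof -
  note coloring = assms(5)
  have improve: "orig_feasible m G b l u (PiQ Q (PiQ_scaled Q y)) \<and> F (PiQ Q (PiQ_scaled Q y)) \<le> F y"
    if y: "orig_feasible m G b l u y" for y
  proof -
    have "y \<in> box_dom l u"
      using y unfolding orig_feasible_def by blast
    then show ?thesis
      unfolding color_avg_def[symmetric]
      using orig_feasible_color_avg[OF coloring assms(2,4) y] color_avg_objective_le[OF coloring assms(1,3)]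
      by blast
  qed
  show ?thesis
    unfolding orig_optimal_def red_optimal_def red_obj_def
    using optimal_solutions_correspond[where f = F
      and feasible = "orig_feasible m G b l u" and feasible' = "red_feasible m G b l u P Q"
      and lift = "PiQ Q" and proj = "PiQ_scaled Q"]
      red_feasible_iff_orig_feasible[OF coloring] improve
    by blast
qed

end
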